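(* Let $n\ge0$ be an integer and let $B^*$ be the unique positive zero of $B\mapsto(2n+1)-BF'_{2n+1}(B)/F_{2n+1}(B)$. Then $B^*\ge\sqrt{n}$.
   Context: For $q>0$, $F_q(y):=\int_0^\infty u^{q-1}e^{yu-u^2/2}\,\mathrm{d}u$ for $y\in\mathbb{R}$. It is known that the function $B\mapsto(2n+1)-BF'_{2n+1}(B)/F_{2n+1}(B)$ is strictly decreasing with a unique zero $B^*>0$. Moreover, $\frac{\partial}{\partial B}\frac{B^{2n+1}}{F_{2n+1}(B)}>0$ if and only if $B<B^*$. *)

theory Defs
  imports "HOL-Analysis.Analysis"
begin

definition F :: "real \<Rightarrow> real \<Rightarrow> real" where
  "F q y = integral {0..} (\<lambda>u. u powr (q - 1) * exp (y * u - u\<^sup>2 / 2))"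

end

theory Submission
  imports Defs "HOL-Real_Asymp.Real_Asymp"
begin

text \<open>Write \<open>I k y\<close> for the integral of \<open>u^k exp(y u - u^2/2)\<close> over \<open>[0, \<infinity>)\<close>, so that
  \<open>F (k+1) = I k\<close> and, differentiating under the integral, \<open>F' (k+1) = I (k+1)\<close>. Integrating the
  derivative of \<open>u^(k+1) exp(y u - u^2/2)\<close> gives \<open>I (k+2) = y I (k+1) + (k+1) I k\<close>, and positivity of
  the integral of \<open>u^k (u - t)^2 exp(y u - u^2/2)\<close> for every \<open>t\<close> gives the Cauchy-Schwarz
  inequality \<open>I (k+1)^2 \<le> I k I (k+2)\<close>. At a critical point \<open>B I (k+1) = (k+1) I k\<close> the recurrence
  yields \<open>I (k+2) = 2(k+1) I k\<close>, so Cauchy-Schwarz becomes \<open>(k+1)^2 \<le> 2(k+1) B^2\<close>; for \<open>k = 2n\<close>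
  this is \<open>B^2 \<ge> n + 1/2\<close>.\<close>

lemma power_le_fact_mult_exp:
  fixes u :: real
  assumes "u \<ge> 0"
  shows "u ^ k \<le> fact k * exp u"
proof -
  obtain t where t: "exp u = (\<Sum>m<Suc k. u ^ m / fact m) + exp t / fact (Suc k) * u ^ Suc k"
    using Maclaurin_exp_le[of u "Suc k"] by blast
  have "u ^ k / fact k \<le> (\<Sum>m<Suc k. u ^ m / fact m)"
    by (rule member_le_sum[where f = "\<lambda>m. u ^ m / fact m"]) (use assms in auto)
  also have "\<dots> \<le> exp u"
    unfolding t using assms by (intro add_increasing2) auto
  finally show ?thesis
    by (simp add: field_simps)
qed

lemma tendsto_integral_atLeastAtMost_at_top:
  fixes f :: "real \<Rightarrow> real"
  assumes "f absolutely_integrable_on {a..}"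
  shows "((\<lambda>b. integral {a..b} f) \<longlongrightarrow> integral {a..} f) at_top"
proof -
  have "((\<lambda>b. LINT x:{a..b}|lebesgue. f x) \<longlongrightarrow> (LINT x:{a..}|lebesgue. f x)) at_top"
    by (rule tendsto_set_lebesgue_integral_at_top) (use assms in auto)
  moreover have "(LINT x:{a..b}|lebesgue. f x) = integral {a..b} f" for b
    by (rule set_lebesgue_integral_eq_integral(2), rule set_integrable_subset[OF assms]) auto
  ultimately show ?thesis
    using set_lebesgue_integral_eq_integral(2)[OF assms] by simp
qed

lemma integral_atLeast_FTC:
  fixes f F :: "real \<Rightarrow> real"
  assumes deriv: "\<And>u. u \<ge> a \<Longrightarrow> (F has_real_derivative f u) (at u)"
    and integrable: "f absolutely_integrable_on {a..}"
    and lim: "(F \<longlongrightarrow> L) at_top"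
  shows "integral {a..} f = L - F a"
proof (rule tendsto_unique[OF _ tendsto_integral_atLeastAtMost_at_top[OF integrable]])
  have "integral {a..b} f = F b - F a" if "b \<ge> a" for b
    using that deriv
    by (intro integral_unique fundamental_theorem_of_calculus)
       (auto simp: has_real_derivative_iff_has_vector_derivative intro: has_vector_derivative_at_within)
  then have "\<forall>\<^sub>F b in at_top. F b - F a = integral {a..b} f"
    by (auto intro: eventually_at_top_linorderI[of a])
  then show "((\<lambda>b. integral {a..b} f) \<longlongrightarrow> L - F a) at_top"
    by (rule Lim_transform_eventually[OF tendsto_diff[OF lim tendsto_const]])
qed simp

lemma has_real_derivative_of_quadratic_remainder:
  fixes f :: "real \<Rightarrow> real"
  assumes "\<And>h. \<bar>h\<bar> < 1 \<Longrightarrow> \<bar>f (y + h) - f y - h * D\<bar> \<le> h\<^sup>2 * K"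
  shows "(f has_real_derivative D) (at y)"
proof -
  have "\<forall>\<^sub>F h in at 0. h \<noteq> 0 \<and> \<bar>h\<bar> < (1::real)"
    unfolding eventually_at by (rule exI[of _ 1]) (auto simp: dist_real_def)
  then have "\<forall>\<^sub>F h in at 0. norm ((f (y + h) - f y) / h - D) \<le> \<bar>h\<bar> * K"
  proof (rule eventually_mono)
    fix h :: real
    assume h: "h \<noteq> 0 \<and> \<bar>h\<bar> < 1"
    then have "\<bar>f (y + h) - f y - h * D\<bar> / \<bar>h\<bar> \<le> h\<^sup>2 * K / \<bar>h\<bar>"
      by (intro divide_right_mono assms) auto
    then show "norm ((f (y + h) - f y) / h - D) \<le> \<bar>h\<bar> * K"
      using h by (auto simp: power2_eq_square abs_divide diff_divide_distrib[symmetric] field_simps)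
  qed
  moreover have "((\<lambda>h. \<bar>h\<bar> * K) \<longlongrightarrow> 0) (at 0)"
    by (auto intro!: tendsto_eq_intros)
  ultimately have "((\<lambda>h. (f (y + h) - f y) / h - D) \<longlongrightarrow> 0) (at 0)"
    by (rule Lim_null_comparison)
  then show ?thesis
    by (simp add: DERIV_def LIM_zero_iff)
qed

definition gauss_kernel :: "nat \<Rightarrow> real \<Rightarrow> real \<Rightarrow> real" where
  "gauss_kernel k y u = u ^ k * exp (y * u - u\<^sup>2 / 2)"

definition gauss_moment :: "nat \<Rightarrow> real \<Rightarrow> real" where
  "gauss_moment k y = integral {0..} (gauss_kernel k y)"

lemma F_eq_gauss_moment: "F (real k + 1) = gauss_moment k"
proof
  fix y
  have "gauss_kernel k y u = u powr (real k + 1 - 1) * exp (y * u - u\<^sup>2 / 2)"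
    if "u \<in> {0..} - {0}" for u
    using that by (simp add: gauss_kernel_def powr_realpow)
  then show "F (real k + 1) y = gauss_moment k y"
    unfolding F_def gauss_moment_def by (intro integral_spike[of "{0}"]) auto
qed

lemma gauss_kernel_nonneg: "u \<ge> 0 \<Longrightarrow> gauss_kernel k y u \<ge> 0"
  by (simp add: gauss_kernel_def)

lemma continuous_on_gauss_kernel: "continuous_on S (gauss_kernel k y)"
  unfolding gauss_kernel_def by (intro continuous_intros) auto

lemma gauss_kernel_le_exp_minus:
  assumes "u \<ge> 0"
  shows "gauss_kernel k y u \<le> fact k * exp ((y + 2)\<^sup>2 / 2) * exp (- u)"
proof -
  have "(y + 1) * u - u\<^sup>2 / 2 \<le> (y + 2)\<^sup>2 / 2 - u"
    using zero_le_power2[of "u - (y + 2)"] by (simp add: power2_eq_square algebra_simps)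
  then have "exp u * exp (y * u - u\<^sup>2 / 2) \<le> exp ((y + 2)\<^sup>2 / 2) * exp (- u)"
    by (simp add: mult_exp_exp algebra_simps)
  moreover have "u ^ k \<le> fact k * exp u"
    using assms by (rule power_le_fact_mult_exp)
  ultimately show ?thesis
    unfolding gauss_kernel_def
    by (smt (verit) exp_gt_zero mult.assoc mult_left_mono mult_right_mono fact_ge_zero)
qed

lemma gauss_kernel_absolutely_integrable: "gauss_kernel k y absolutely_integrable_on {0..}"
proof (rule measurable_bounded_by_integrable_imp_absolutely_integrable)
  show "gauss_kernel k y \<in> borel_measurable (lebesgue_on {0..})"
    by (intro continuous_imp_measurable_on_sets_lebesgue continuous_on_gauss_kernel) auto
  show "(\<lambda>u. fact k * exp ((y + 2)\<^sup>2 / 2) * exp (- u)) integrable_on {0..}"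
    using integrable_on_cmult_left[OF integrable_on_exp_minus_to_infinity[of 1 0]] by simp
qed (auto simp: gauss_kernel_nonneg gauss_kernel_le_exp_minus)

lemma gauss_kernel_integrable: "gauss_kernel k y integrable_on {0..}"
  using gauss_kernel_absolutely_integrable by (rule set_lebesgue_integral_eq_integral(1))

lemma gauss_kernel_tendsto_0: "(gauss_kernel k y \<longlongrightarrow> 0) at_top"
proof (rule Lim_null_comparison)
  show "\<forall>\<^sub>F u in at_top. norm (gauss_kernel k y u) \<le> fact k * exp ((y + 2)\<^sup>2 / 2) * exp (- u)"
    by (intro eventually_at_top_linorderI[of 0]) (simp add: gauss_kernel_nonneg gauss_kernel_le_exp_minus)
  show "((\<lambda>u. fact k * exp ((y + 2)\<^sup>2 / 2) * exp (- u :: real)) \<longlongrightarrow> 0) at_top"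
    by real_asymp
qed

lemma gauss_moment_nonneg: "gauss_moment k y \<ge> 0"
  unfolding gauss_moment_def
  by (intro integral_nonneg gauss_kernel_integrable) (auto intro: gauss_kernel_nonneg)

lemma gauss_kernel_shift: "gauss_kernel k (y + h) u = gauss_kernel k y u * exp (h * u)"
  unfolding gauss_kernel_def by (simp add: algebra_simps flip: exp_add)

text \<open>Taylor's bound \<open>|e\<^sup>x - 1 - x| \<le> x\<^sup>2 e\<^bsup>|x|\<^esup>\<close> at \<open>x = hu\<close>; for \<open>|h| \<le> 1\<close> the factor
  \<open>e\<^sup>u\<close> is absorbed by shifting the parameter from \<open>y\<close> to \<open>y + 1\<close>.\<close>
lemma gauss_moment_remainder_bound:
  assumes "\<bar>h\<bar> \<le> 1"
  shows "\<bar>gauss_moment k (y + h) - gauss_moment k y - h * gauss_moment (Suc k) y\<bar>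
           \<le> h\<^sup>2 * gauss_moment (k + 2) (y + 1)"
proof -
  let ?r = "\<lambda>u. gauss_kernel k (y + h) u - gauss_kernel k y u - h * gauss_kernel (Suc k) y u"
  have "\<bar>?r u\<bar> \<le> h\<^sup>2 * gauss_kernel (k + 2) (y + 1) u" if u: "u \<ge> 0" for u
  proof -
    have "\<bar>exp (h * u) - 1 - h * u\<bar> \<le> exp \<bar>h * u\<bar> * (h * u)\<^sup>2"
      using Taylor_exp_field[of "h * u" 1] by (simp add: eval_nat_numeral diff_diff_eq)
    also have "\<dots> \<le> exp u * (h * u)\<^sup>2"
      using assms u by (intro mult_right_mono) (auto simp: abs_mult mult_left_le_one_le)
    finally have taylor: "\<bar>exp (h * u) - 1 - h * u\<bar> \<le> exp u * (h * u)\<^sup>2" .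
    have "?r u = gauss_kernel k y u * (exp (h * u) - 1 - h * u)"
      unfolding gauss_kernel_shift by (simp add: gauss_kernel_def algebra_simps)
    then have "\<bar>?r u\<bar> = gauss_kernel k y u * \<bar>exp (h * u) - 1 - h * u\<bar>"
      by (simp add: abs_mult gauss_kernel_nonneg[OF u])
    also have "\<dots> \<le> gauss_kernel k y u * (exp u * (h * u)\<^sup>2)"
      using taylor gauss_kernel_nonneg[OF u] by (rule mult_left_mono)
    also have "\<dots> = h\<^sup>2 * gauss_kernel (k + 2) (y + 1) u"
      unfolding gauss_kernel_shift
      by (simp add: gauss_kernel_def power_add power2_eq_square algebra_simps)
    finally show ?thesis .
  qed
  then have "norm (integral {0..} ?r) \<le> integral {0..} (\<lambda>u. h\<^sup>2 * gauss_kernel (k + 2) (y + 1) u)"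
    by (intro integral_norm_bound_integral)
       (auto intro!: integrable_diff integrable_on_mult_right gauss_kernel_integrable)
  then show ?thesis
    by (simp add: gauss_moment_def integral_diff integrable_diff integrable_on_mult_right
        gauss_kernel_integrable)
qed

lemma gauss_moment_has_real_derivative:
  "(gauss_moment k has_real_derivative gauss_moment (Suc k) y) (at y)"
  by (rule has_real_derivative_of_quadratic_remainder[where K = "gauss_moment (k + 2) (y + 1)"])
     (rule gauss_moment_remainder_bound, simp)

lemma gauss_kernel_has_real_derivative:
  "(gauss_kernel (Suc k) y has_real_derivative
     (real k + 1) * gauss_kernel k y u + y * gauss_kernel (Suc k) y u - gauss_kernel (k + 2) y u) (at u)"
  unfolding gauss_kernel_def
  by (rule DERIV_cong[OF DERIV_mult[OF DERIV_pow]], auto intro!: derivative_eq_intros)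
     (simp add: power2_eq_square algebra_simps)

lemma gauss_moment_recurrence:
  "gauss_moment (k + 2) y = y * gauss_moment (Suc k) y + (real k + 1) * gauss_moment k y"
proof -
  let ?f = "\<lambda>u. (real k + 1) * gauss_kernel k y u + y * gauss_kernel (Suc k) y u
                 - gauss_kernel (k + 2) y u"
  have "integral {0..} ?f = 0 - gauss_kernel (Suc k) y 0"
    by (rule integral_atLeast_FTC[OF gauss_kernel_has_real_derivative _ gauss_kernel_tendsto_0])
       (intro set_integral_diff set_integral_add set_integrable_mult_right
         gauss_kernel_absolutely_integrable)
  moreover have "gauss_kernel (Suc k) y 0 = 0"
    by (simp add: gauss_kernel_def)
  ultimately show ?thesis
    by (simp add: gauss_moment_def integral_add integral_diff integrable_add
        integrable_on_mult_right gauss_kernel_integrable)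
qed

lemma gauss_moment_quadratic_nonneg:
  "0 \<le> gauss_moment (k + 2) y - 2 * t * gauss_moment (Suc k) y + t\<^sup>2 * gauss_moment k y"
proof -
  let ?q = "\<lambda>u. gauss_kernel (k + 2) y u - 2 * t * gauss_kernel (Suc k) y u
                 + t\<^sup>2 * gauss_kernel k y u"
  have q_integrable: "?q integrable_on {0..}"
    by (intro integrable_add integrable_diff integrable_on_mult_right gauss_kernel_integrable)
  have "?q u = gauss_kernel k y u * (u - t)\<^sup>2" for u
    by (simp add: gauss_kernel_def power2_eq_square algebra_simps)
  then have "integral {0..} ?q \<ge> 0"
    using q_integrable by (auto intro!: integral_nonneg mult_nonneg_nonneg gauss_kernel_nonneg)
  then show ?thesis
    using q_integrable
    by (simp add: gauss_moment_def integral_add integral_diff integrable_diff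
        integrable_on_mult_right gauss_kernel_integrable)
qed

lemma discriminant_le_of_quadratic_nonneg:
  fixes a b c :: real
  assumes "a \<ge> 0" and "\<And>t. 0 \<le> c - 2 * t * b + t\<^sup>2 * a"
  shows "b\<^sup>2 \<le> a * c"
proof (cases "a = 0")
  case True
  have "b = 0"
  proof (rule ccontr)
    assume "b \<noteq> 0"
    then show False
      using assms(2)[of "(c + 1) / (2 * b)"] True by (simp add: field_simps)
  qed
  then show ?thesis
    using assms(2)[of 0] True by simp
next
  case False
  then show ?thesis
    using assms(1) assms(2)[of "b / a"] by (simp add: field_simps power2_eq_square)
qed

lemma gauss_moment_cauchy_schwarz:
  "gauss_moment (Suc k) y ^ 2 \<le> gauss_moment k y * gauss_moment (k + 2) y"
  by (rule discriminant_le_of_quadratic_nonneg[OF gauss_moment_nonneg gauss_moment_quadratic_nonneg])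

lemma gauss_moment_critical_point_bound:
  assumes pos: "gauss_moment k y > 0"
    and critical: "y * gauss_moment (Suc k) y = (real k + 1) * gauss_moment k y"
  shows "real k + 1 \<le> 2 * y\<^sup>2"
proof -
  define q a b where "q = real k + 1" and "a = gauss_moment k y" and "b = gauss_moment (Suc k) y"
  have "gauss_moment (k + 2) y = 2 * q * a"
    using gauss_moment_recurrence[of k y] critical by (simp add: q_def a_def)
  then have "b\<^sup>2 \<le> a * (2 * q * a)"
    using gauss_moment_cauchy_schwarz[of k y] by (simp add: a_def b_def)
  then have "(q * a)\<^sup>2 \<le> y\<^sup>2 * (a * (2 * q * a))"
    using critical unfolding q_def a_def b_def
    by (metis power_mult_distrib mult_left_mono zero_le_power2)
  then have "q * (q * a\<^sup>2) \<le> q * (2 * y\<^sup>2 * a\<^sup>2)"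
    by (simp add: power2_eq_square algebra_simps)
  then have "q * a\<^sup>2 \<le> 2 * y\<^sup>2 * a\<^sup>2"
    by (rule mult_left_le_imp_le) (simp add: q_def)
  then show ?thesis
    using pos by (simp add: q_def a_def)
qed

theorem lemma2p1:
  fixes n :: nat and Bstar :: real
  assumes "Bstar > 0"
    and "real (2*n+1) - Bstar * deriv (F (real (2*n+1))) Bstar / F (real (2*n+1)) Bstar = 0"
  shows "Bstar \<ge> sqrt (real n)"
proof -
  have F_eq: "F (real (2 * n + 1)) = gauss_moment (2 * n)"
    using F_eq_gauss_moment[of "2 * n"] by (simp add: add.commute)
  have "deriv (gauss_moment (2 * n)) Bstar = gauss_moment (Suc (2 * n)) Bstar"
    by (rule DERIV_imp_deriv[OF gauss_moment_has_real_derivative])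
  then have critical: "real (2 * n) + 1 = Bstar * gauss_moment (Suc (2 * n)) Bstar / gauss_moment (2 * n) Bstar"
    using assms(2) unfolding F_eq by simp
  then have "gauss_moment (2 * n) Bstar \<noteq> 0"
    by auto
  then have "gauss_moment (2 * n) Bstar > 0"
    using gauss_moment_nonneg[of "2 * n" Bstar] by simp
  moreover from this critical
  have "Bstar * gauss_moment (Suc (2 * n)) Bstar = (real (2 * n) + 1) * gauss_moment (2 * n) Bstar"
    by (simp add: field_simps)
  ultimately have "real (2 * n) + 1 \<le> 2 * Bstar\<^sup>2"
    by (rule gauss_moment_critical_point_bound)
  then have "sqrt (real n) \<le> sqrt (Bstar\<^sup>2)"
    by (intro real_sqrt_le_mono) simp
  with assms(1) show ?thesis
    by simp
qed

end
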